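(* Let $Z=(z_{ij})$ be the generic $n\times n$ matrix of variables, and let $I,J\subseteq\{1,\ldots,n\}$ with $|I|=|J|$. Suppose every variable dividing the antidiagonal term of the minor $\Delta_{I,J}(Z)$ lies on or above the main antidiagonal of $Z$ (i.e. is some $z_{ij}$ with $i+j\le n+1$). Then among the monomials appearing in $\Delta_{I,J}(Z)$, the antidiagonal term is the unique one of lowest $\omega$-weight.
   Context: $\omega=(\omega_{ij})$ is the integer matrix with $\omega_{ij}=3^{\,n-i-j}$ if $i+j\le n$ and $\omega_{ij}=0$ if $i+j>n$. The $\omega$-weight of a monomial $\prod z_{ij}^{e_{ij}}$ in $\mathbb{C}[z_{ij}]$ is $\sum e_{ij}\omega_{ij}$. $\Delta_{I,J}(Z)$ denotes the minor of $Z$ with row set $I$ and column set $J$; its antidiagonal term is the product of the entries on the main antidiagonal of the corresponding square submatrix (taking rows and columns in increasing order), i.e. for $I=\{i_1<\cdots<i_k\}$, $J=\{j_1<\cdots<j_k\}$ it is $\prod_{r=1}^k z_{i_r,j_{k+1-r}}$. *)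

theory Defs
  imports Main "HOL-Library.Multiset" "HOL-Library.FuncSet"
begin

text \<open>Variables z_ij of the generic n x n matrix are indexed by pairs (i,j) with
  1 <= i,j <= n.  A monomial in the z_ij is a finite multiset of index pairs
  (the exponent of z_ij is the multiplicity of (i,j)).\<close>

type_synonym monomial = "(nat \<times> nat) multiset"

definition omega :: "nat \<Rightarrow> nat \<Rightarrow> nat \<Rightarrow> nat" where
  "omega n i j = (if i + j \<le> n then 3 ^ (n - i - j) else 0)"

definition omega_weight :: "nat \<Rightarrow> monomial \<Rightarrow> nat" where
  "omega_weight n m = (\<Sum>p\<in>#m. omega n (fst p) (snd p))"

text \<open>Bijections I -> J (extensional, so there are finitely many).\<close>
definition bijs :: "nat set \<Rightarrow> nat set \<Rightarrow> (nat \<Rightarrow> nat) set" where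
  "bijs I J = {\<sigma> \<in> I \<rightarrow>\<^sub>E J. bij_betw \<sigma> I J}"

definition bij_sign :: "nat set \<Rightarrow> (nat \<Rightarrow> nat) \<Rightarrow> int" where
  "bij_sign I \<sigma> = (-1) ^ card {(i, i'). i \<in> I \<and> i' \<in> I \<and> i < i' \<and> \<sigma> i' < \<sigma> i}"

definition bij_monomial :: "nat set \<Rightarrow> (nat \<Rightarrow> nat) \<Rightarrow> monomial" where
  "bij_monomial I \<sigma> = image_mset (\<lambda>i. (i, \<sigma> i)) (mset_set I)"

text \<open>Coefficient of the monomial m in the minor Delta_{I,J}(Z) (Leibniz expansion).\<close>
definition minor_coeff :: "nat set \<Rightarrow> nat set \<Rightarrow> monomial \<Rightarrow> int" where
  "minor_coeff I J m = (\<Sum>\<sigma>\<in>{\<sigma> \<in> bijs I J. bij_monomial I \<sigma> = m}. bij_sign I \<sigma>)"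

definition minor_monomials :: "nat set \<Rightarrow> nat set \<Rightarrow> monomial set" where
  "minor_monomials I J = {m. minor_coeff I J m \<noteq> 0}"

definition antidiag_term :: "nat set \<Rightarrow> nat set \<Rightarrow> monomial" where
  "antidiag_term I J = mset (zip (sorted_list_of_set I) (rev (sorted_list_of_set J)))"

end

theory Submission
  imports Defs "HOL-Combinatorics.Transposition"
begin

text \<open>Let a be the smallest row in I and d the largest column in J; the antidiagonal term
  pairs a with d. A bijection sending a to some column c < d and some row b > a to d can be
  changed by swapping the images of a and b. Since a + d \<le> n + 1 we have a + c \<le> n, so
  \<open>\<omega>\<^sub>a\<^sub>c = 3^(n-a-c)\<close> is at least three times each of \<open>\<omega>\<^sub>a\<^sub>d\<close> and \<open>\<omega>\<^sub>b\<^sub>c\<close>, and the swap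
  strictly lowers the weight. By induction on |I| the antidiagonal bijection is therefore the
  unique weight minimiser among all bijections I \<rightarrow> J. It is also the only bijection producing
  its monomial, so that monomial occurs in the minor with coefficient \<open>\<plusminus>1\<close>.\<close>

lemma sorted_list_of_set_snoc_Max:
  assumes "finite A" "A \<noteq> {}"
  shows "sorted_list_of_set A = sorted_list_of_set (A - {Max A}) @ [Max A]"
proof -
  let ?l = "sorted_list_of_set (A - {Max A}) @ [Max A]"
  have Max: "Max A \<in> A" using assms by (rule Max_in)
  have "sorted_wrt (<) ?l"
    using assms Max by (auto simp: sorted_wrt_append intro!: le_neq_trans[OF Max_ge[OF assms(1)]])
  moreover have "set ?l = A" using assms Max by (simp add: insert_absorb)
  moreover have "length ?l = card A"
    using assms Max by (simp add: card_Diff_singleton) (metis Suc_pred card_gt_0_iff)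
  ultimately show ?thesis using sorted_list_of_set_unique[OF assms(1)] by blast
qed

lemma antidiag_term_Min_Max:
  assumes "finite I" "finite J" "I \<noteq> {}" "J \<noteq> {}"
  shows "antidiag_term I J = add_mset (Min I, Max J) (antidiag_term (I - {Min I}) (J - {Max J}))"
  unfolding antidiag_term_def
  using sorted_list_of_set_nonempty[OF assms(1,3)] sorted_list_of_set_snoc_Max[OF assms(2,4)]
  by simp

definition bij_weight :: "nat \<Rightarrow> nat set \<Rightarrow> (nat \<Rightarrow> nat) \<Rightarrow> nat" where
  "bij_weight n I \<sigma> = (\<Sum>i\<in>I. omega n i (\<sigma> i))"

lemma omega_weight_bij_monomial:
  "finite I \<Longrightarrow> omega_weight n (bij_monomial I \<sigma>) = bij_weight n I \<sigma>"
  unfolding omega_weight_def bij_monomial_def bij_weight_def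
  by (simp add: multiset.map_comp o_def sum_unfold_sum_mset)

lemma three_omega_le:
  assumes "s < i + j" "s \<le> n"
  shows "3 * omega n i j \<le> 3 ^ (n - s)"
proof (cases "i + j \<le> n")
  case True
  then have "3 * omega n i j = 3 ^ Suc (n - i - j)" by (simp add: omega_def)
  also have "\<dots> \<le> 3 ^ (n - s)" using assms True by (intro power_increasing) auto
  finally show ?thesis .
qed (simp add: omega_def)

lemma omega_exchange:
  assumes "a < b" "c < d" "a + d \<le> n + 1"
  shows "omega n a d + omega n b c < omega n a c + omega n b d"
proof -
  have "a + c \<le> n" using assms by linarith
  then have "omega n a c = 3 ^ (n - (a + c))" by (simp add: omega_def)
  moreover have "3 * omega n a d \<le> 3 ^ (n - (a + c))" "3 * omega n b c \<le> 3 ^ (n - (a + c))"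
    using assms \<open>a + c \<le> n\<close> by (auto intro: three_omega_le)
  moreover have "(0::nat) < 3 ^ (n - (a + c))" by simp
  ultimately show ?thesis by linarith
qed

lemma sum_comp_transpose:
  fixes g :: "'a \<Rightarrow> 'b \<Rightarrow> 'c::comm_monoid_add"
  assumes "finite I" "a \<in> I" "b \<in> I" "a \<noteq> b"
  shows "(\<Sum>i\<in>I. g i (\<sigma> (Transposition.transpose a b i))) + g a (\<sigma> a) + g b (\<sigma> b)
       = (\<Sum>i\<in>I. g i (\<sigma> i)) + g a (\<sigma> b) + g b (\<sigma> a)"
proof -
  have split: "(\<Sum>i\<in>I. h i) = h a + h b + (\<Sum>i\<in>I - {a, b}. h i)" for h :: "'a \<Rightarrow> 'c"
  proof -
    have "(\<Sum>i\<in>I. h i) = h a + (\<Sum>i\<in>I - {a}. h i)"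
      using assms by (intro sum.remove) auto
    also have "(\<Sum>i\<in>I - {a}. h i) = h b + (\<Sum>i\<in>I - {a} - {b}. h i)"
      using assms by (intro sum.remove) auto
    also have "I - {a} - {b} = I - {a, b}" by auto
    finally show ?thesis by (simp add: add.assoc)
  qed
  have "(\<Sum>i\<in>I - {a, b}. g i (\<sigma> (Transposition.transpose a b i))) = (\<Sum>i\<in>I - {a, b}. g i (\<sigma> i))"
    by (intro sum.cong) auto
  then show ?thesis
    using split[of "\<lambda>i. g i (\<sigma> (Transposition.transpose a b i))"] split[of "\<lambda>i. g i (\<sigma> i)"]
    by (simp add: ac_simps)
qed

lemma bijs_comp_transpose:
  assumes "\<sigma> \<in> bijs I J" "a \<in> I" "b \<in> I"
  shows "\<sigma> \<circ> Transposition.transpose a b \<in> bijs I J"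
proof -
  have "bij_betw (\<sigma> \<circ> Transposition.transpose a b) I J"
    using assms by (intro bij_betw_trans[where B = I]) (auto simp: bijs_def)
  moreover have "\<sigma> \<circ> Transposition.transpose a b \<in> I \<rightarrow>\<^sub>E J"
    using assms by (auto simp: bijs_def PiE_def extensional_def Transposition.transpose_def)
  ultimately show ?thesis by (simp add: bijs_def)
qed

lemma bijs_fun_upd_insert:
  assumes "\<tau> \<in> bijs I J" "a \<notin> I" "d \<notin> J"
  shows "\<tau>(a := d) \<in> bijs (insert a I) (insert d J)"
proof -
  have "bij_betw \<tau> I J" "\<tau> \<in> I \<rightarrow>\<^sub>E J" using assms(1) by (auto simp: bijs_def)
  moreover have "bij_betw (\<tau>(a := d)) I J = bij_betw \<tau> I J"
    using assms(2) by (intro bij_betw_cong) auto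
  ultimately show ?thesis
    using assms(2,3) by (auto simp: bijs_def PiE_def extensional_def bij_betw_def)
qed

lemma bijs_restrict_Diff:
  assumes "\<sigma> \<in> bijs I J" "a \<in> I"
  shows "restrict \<sigma> (I - {a}) \<in> bijs (I - {a}) (J - {\<sigma> a})"
proof -
  have "bij_betw \<sigma> (I - {a}) (J - {\<sigma> a})"
    using assms by (intro bij_betw_DiffI) (auto simp: bijs_def bij_betw_def)
  moreover have "bij_betw (restrict \<sigma> (I - {a})) (I - {a}) (J - {\<sigma> a}) = bij_betw \<sigma> (I - {a}) (J - {\<sigma> a})"
    by (intro bij_betw_cong) simp
  ultimately show ?thesis by (auto simp: bijs_def bij_betw_def)
qed

lemma bij_monomial_fun_upd_insert:
  assumes "finite I" "a \<notin> I"
  shows "bij_monomial (insert a I) (\<tau>(a := d)) = add_mset (a, d) (bij_monomial I \<tau>)"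
proof -
  have "image_mset (\<lambda>i. (i, (\<tau>(a := d)) i)) (mset_set I) = image_mset (\<lambda>i. (i, \<tau> i)) (mset_set I)"
    using assms by (intro image_mset_cong) auto
  then show ?thesis using assms by (simp add: bij_monomial_def)
qed

lemma bij_monomial_inj_on:
  assumes "finite I"
  shows "inj_on (bij_monomial I) (bijs I J)"
proof (rule inj_onI)
  fix \<sigma> \<sigma>' assume \<sigma>: "\<sigma> \<in> bijs I J" and \<sigma>': "\<sigma>' \<in> bijs I J"
    and eq: "bij_monomial I \<sigma> = bij_monomial I \<sigma>'"
  have "\<sigma> i = \<sigma>' i" if "i \<in> I" for i
  proof -
    have "(i, \<sigma> i) \<in># bij_monomial I \<sigma>"
      using that assms by (simp add: bij_monomial_def)
    then have "(i, \<sigma> i) \<in># bij_monomial I \<sigma>'" by (simp add: eq)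
    then show ?thesis by (auto simp: bij_monomial_def)
  qed
  then show "\<sigma> = \<sigma>'" using \<sigma> \<sigma>' by (intro PiE_ext[of _ I "\<lambda>_. J"]) (auto simp: bijs_def)
qed

lemma bij_weight_exchange:
  assumes \<sigma>: "\<sigma> \<in> bijs I J" and "finite I"
    and a: "a \<in> I" "\<forall>i\<in>I. a \<le> i" and d: "d \<in> J" "\<forall>j\<in>J. j \<le> d"
    and "a + d \<le> n + 1" and "\<sigma> a \<noteq> d"
  obtains \<sigma>' where "\<sigma>' \<in> bijs I J" "\<sigma>' a = d" "bij_weight n I \<sigma>' < bij_weight n I \<sigma>"
proof -
  obtain b where b: "b \<in> I" "\<sigma> b = d"
    using \<sigma> d(1) by (auto simp: bijs_def bij_betw_def)
  define c where "c = \<sigma> a"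
  have "a < b" using a b \<open>\<sigma> a \<noteq> d\<close> by (metis order_le_neq_trans)
  have "c \<in> J" using \<sigma> a(1) by (auto simp: bijs_def c_def)
  then have "c < d" using d(2) \<open>\<sigma> a \<noteq> d\<close> by (auto simp: c_def order_le_neq_trans)
  define \<sigma>' where "\<sigma>' = \<sigma> \<circ> Transposition.transpose a b"
  have "bij_weight n I \<sigma>' + omega n a c + omega n b d = bij_weight n I \<sigma> + omega n a d + omega n b c"
    using sum_comp_transpose[OF \<open>finite I\<close> a(1) b(1), of "omega n" \<sigma>] \<open>a < b\<close> b(2)
    by (simp add: bij_weight_def \<sigma>'_def c_def)
  moreover have "omega n a d + omega n b c < omega n a c + omega n b d"
    using \<open>a < b\<close> \<open>c < d\<close> \<open>a + d \<le> n + 1\<close> by (rule omega_exchange)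
  ultimately have "bij_weight n I \<sigma>' < bij_weight n I \<sigma>" by linarith
  moreover have "\<sigma>' \<in> bijs I J" "\<sigma>' a = d"
    using bijs_comp_transpose[OF \<sigma> a(1) b(1)] b(2) by (simp_all add: \<sigma>'_def)
  ultimately show ?thesis using that by blast
qed

definition unique_min_bij :: "nat \<Rightarrow> nat set \<Rightarrow> nat set \<Rightarrow> (nat \<Rightarrow> nat) \<Rightarrow> bool" where
  "unique_min_bij n I J \<tau> \<longleftrightarrow>
     \<tau> \<in> bijs I J \<and> (\<forall>\<sigma>\<in>bijs I J. \<sigma> \<noteq> \<tau> \<longrightarrow> bij_weight n I \<tau> < bij_weight n I \<sigma>)"

lemma unique_min_bij_insert:
  assumes \<tau>: "unique_min_bij n I J \<tau>" and "finite I"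
    and a: "\<forall>i\<in>I. a < i" and d: "\<forall>j\<in>J. j < d" and "a + d \<le> n + 1"
  shows "unique_min_bij n (insert a I) (insert d J) (\<tau>(a := d))"
proof -
  let ?I = "insert a I" and ?J = "insert d J" and ?\<tau> = "\<tau>(a := d)"
  have "a \<notin> I" "d \<notin> J" using a d by auto
  have \<tau>_bij: "\<tau> \<in> bijs I J" using \<tau> by (simp add: unique_min_bij_def)
  have \<tau>_bij': "?\<tau> \<in> bijs ?I ?J" using bijs_fun_upd_insert[OF \<tau>_bij \<open>a \<notin> I\<close> \<open>d \<notin> J\<close>] .
  have weight_insert: "bij_weight n ?I \<sigma> = omega n a (\<sigma> a) + bij_weight n I \<sigma>" for \<sigma>
    using \<open>a \<notin> I\<close> \<open>finite I\<close> by (simp add: bij_weight_def)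
  have "bij_weight n I ?\<tau> = bij_weight n I \<tau>"
    using \<open>a \<notin> I\<close> unfolding bij_weight_def by (intro sum.cong) auto
  then have weight_\<tau>: "bij_weight n ?I ?\<tau> = omega n a d + bij_weight n I \<tau>"
    using weight_insert by simp
  have corner: "bij_weight n ?I ?\<tau> \<le> bij_weight n ?I \<sigma> \<and> (\<sigma> \<noteq> ?\<tau> \<longrightarrow> bij_weight n ?I ?\<tau> < bij_weight n ?I \<sigma>)"
    if \<sigma>: "\<sigma> \<in> bijs ?I ?J" "\<sigma> a = d" for \<sigma>
  proof (cases "restrict \<sigma> I = \<tau>")
    case True
    have "\<sigma> i = ?\<tau> i" if "i \<in> ?I" for i
      using that \<sigma>(2) \<open>a \<notin> I\<close> True[symmetric] by auto
    then have "\<sigma> = ?\<tau>" using \<sigma>(1) \<tau>_bij' by (intro PiE_ext[of _ ?I "\<lambda>_. ?J"]) (auto simp: bijs_def)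
    then show ?thesis by simp
  next
    case False
    have "restrict \<sigma> I \<in> bijs I J"
      using bijs_restrict_Diff[OF \<sigma>(1), of a] \<sigma>(2) \<open>a \<notin> I\<close> \<open>d \<notin> J\<close> by simp
    then have "bij_weight n I \<tau> < bij_weight n I (restrict \<sigma> I)"
      using \<tau> False by (auto simp: unique_min_bij_def)
    moreover have "bij_weight n I (restrict \<sigma> I) = bij_weight n I \<sigma>"
      by (simp add: bij_weight_def)
    ultimately show ?thesis using weight_insert[of \<sigma>] weight_\<tau> \<sigma>(2) by simp
  qed
  have "bij_weight n ?I ?\<tau> < bij_weight n ?I \<sigma>" if \<sigma>: "\<sigma> \<in> bijs ?I ?J" "\<sigma> \<noteq> ?\<tau>" for \<sigma>
  proof (cases "\<sigma> a = d")
    case True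
    then show ?thesis using corner \<sigma> by blast
  next
    case False
    have "finite ?I" "a \<in> ?I" "\<forall>i\<in>?I. a \<le> i" "d \<in> ?J" "\<forall>j\<in>?J. j \<le> d"
      using \<open>finite I\<close> a d by auto
    then obtain \<sigma>' where \<sigma>': "\<sigma>' \<in> bijs ?I ?J" "\<sigma>' a = d"
        and "bij_weight n ?I \<sigma>' < bij_weight n ?I \<sigma>"
      using bij_weight_exchange[OF \<sigma>(1)] \<open>a + d \<le> n + 1\<close> False by blast
    moreover have "bij_weight n ?I ?\<tau> \<le> bij_weight n ?I \<sigma>'" using corner[OF \<sigma>'] by blast
    ultimately show ?thesis by linarith
  qed
  then show ?thesis using \<tau>_bij' by (simp add: unique_min_bij_def)
qed

lemma antidiag_unique_min_bij:
  assumes "finite I" "finite J" "card I = card J"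
    and "\<forall>(i, j) \<in> set_mset (antidiag_term I J). i + j \<le> n + 1"
  shows "\<exists>\<tau>. unique_min_bij n I J \<tau> \<and> bij_monomial I \<tau> = antidiag_term I J"
  using assms
proof (induction "card I" arbitrary: I J)
  case 0
  then have "I = {}" "J = {}" by auto
  then have "bijs I J = {\<lambda>_. undefined}" by (auto simp: bijs_def bij_betw_def)
  then show ?case using \<open>I = {}\<close> \<open>J = {}\<close>
    by (auto simp: unique_min_bij_def bij_monomial_def antidiag_term_def)
next
  case (Suc k I J)
  have "I \<noteq> {}" "J \<noteq> {}" using Suc.hyps(2) Suc.prems(3) by auto
  define a where "a = Min I"
  define d where "d = Max J"
  have "a \<in> I" "d \<in> J" using Suc.prems(1,2) \<open>I \<noteq> {}\<close> \<open>J \<noteq> {}\<close> by (simp_all add: a_def d_def)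
  have antidiag: "antidiag_term I J = add_mset (a, d) (antidiag_term (I - {a}) (J - {d}))"
    using antidiag_term_Min_Max[OF Suc.prems(1,2) \<open>I \<noteq> {}\<close> \<open>J \<noteq> {}\<close>] by (simp add: a_def d_def)
  have "k = card (I - {a})" "card (I - {a}) = card (J - {d})"
    using Suc.hyps(2) Suc.prems(3) \<open>a \<in> I\<close> \<open>d \<in> J\<close> by simp_all
  moreover have "\<forall>(i, j) \<in> set_mset (antidiag_term (I - {a}) (J - {d})). i + j \<le> n + 1"
    using Suc.prems(4) antidiag by auto
  ultimately obtain \<tau> where \<tau>: "unique_min_bij n (I - {a}) (J - {d}) \<tau>"
      and \<tau>_monomial: "bij_monomial (I - {a}) \<tau> = antidiag_term (I - {a}) (J - {d})"
    using Suc.hyps(1) Suc.prems(1,2) by blast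
  have "\<forall>i\<in>I - {a}. a < i" "\<forall>j\<in>J - {d}. j < d"
    using Suc.prems(1,2) by (auto simp: a_def d_def order_le_neq_trans)
  moreover have "a + d \<le> n + 1" using Suc.prems(4) antidiag by auto
  ultimately have "unique_min_bij n (insert a (I - {a})) (insert d (J - {d})) (\<tau>(a := d))"
    using Suc.prems(1) by (intro unique_min_bij_insert[OF \<tau>]) auto
  then have "unique_min_bij n I J (\<tau>(a := d))"
    using \<open>a \<in> I\<close> \<open>d \<in> J\<close> by (simp add: insert_absorb)
  moreover have "bij_monomial I (\<tau>(a := d)) = antidiag_term I J"
    using bij_monomial_fun_upd_insert[of "I - {a}" a \<tau> d] Suc.prems(1) \<open>a \<in> I\<close>
    by (simp add: insert_absorb \<tau>_monomial antidiag)
  ultimately show ?case by blast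
qed

lemma minor_coeff_bij_monomial:
  assumes "finite I" "\<tau> \<in> bijs I J"
  shows "minor_coeff I J (bij_monomial I \<tau>) = bij_sign I \<tau>"
proof -
  have "{\<sigma> \<in> bijs I J. bij_monomial I \<sigma> = bij_monomial I \<tau>} = {\<tau>}"
    using assms inj_onD[OF bij_monomial_inj_on[OF assms(1)]] by blast
  then show ?thesis by (simp add: minor_coeff_def)
qed

lemma bij_sign_nonzero: "bij_sign I \<sigma> \<noteq> 0"
  by (simp add: bij_sign_def)

lemma minor_monomials_obtain_bij:
  assumes "m \<in> minor_monomials I J"
  obtains \<sigma> where "\<sigma> \<in> bijs I J" "bij_monomial I \<sigma> = m"
proof -
  have "minor_coeff I J m \<noteq> 0" using assms by (simp add: minor_monomials_def)
  then have "{\<sigma> \<in> bijs I J. bij_monomial I \<sigma> = m} \<noteq> {}"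
    unfolding minor_coeff_def by (metis sum.empty)
  then show ?thesis using that by blast
qed

theorem mainTheorem2:
  fixes n :: nat and I J :: "nat set"
  assumes "I \<subseteq> {1..n}" and "J \<subseteq> {1..n}" and "card I = card J"
    and "\<forall>(i, j) \<in> set_mset (antidiag_term I J). i + j \<le> n + 1"
  shows "antidiag_term I J \<in> minor_monomials I J \<and>
         (\<forall>m \<in> minor_monomials I J. m \<noteq> antidiag_term I J \<longrightarrow>
            omega_weight n (antidiag_term I J) < omega_weight n m)"
proof -
  have fin: "finite I" "finite J" using assms(1,2) by (auto intro: finite_subset)
  obtain \<tau> where \<tau>: "unique_min_bij n I J \<tau>" and \<tau>_monomial: "bij_monomial I \<tau> = antidiag_term I J"
    using antidiag_unique_min_bij[OF fin assms(3,4)] by blast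
  have \<tau>_bij: "\<tau> \<in> bijs I J" using \<tau> by (simp add: unique_min_bij_def)
  have "antidiag_term I J \<in> minor_monomials I J"
    using minor_coeff_bij_monomial[OF fin(1) \<tau>_bij] bij_sign_nonzero
    by (simp add: minor_monomials_def \<tau>_monomial)
  moreover have "omega_weight n (antidiag_term I J) < omega_weight n m"
    if m: "m \<in> minor_monomials I J" "m \<noteq> antidiag_term I J" for m
  proof -
    obtain \<sigma> where \<sigma>: "\<sigma> \<in> bijs I J" "bij_monomial I \<sigma> = m"
      using minor_monomials_obtain_bij[OF m(1)] .
    then have "bij_weight n I \<tau> < bij_weight n I \<sigma>"
      using \<tau> m(2) \<tau>_monomial by (auto simp: unique_min_bij_def)
    then show ?thesis
      using omega_weight_bij_monomial[OF fin(1)] \<sigma>(2) \<tau>_monomial by metis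
  qed
  ultimately show ?thesis by blast
qed

end
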